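(* There exist constants $c_1,c_2,c_3>0$ and, for every integer $t\ge1$, a graph $G_t$ with $n_t$ vertices and $m_t$ edges, where $c_1t\le n_t\le c_2t$ and $c_1t^2\le m_t\le c_2t^2$, together with an LA-succinct clique cover of $G_t$ whose admissibility sets $\mathcal{A}$ satisfy $\|\mathcal{A}\|\ge c_3\,n_tm_t$. In particular $\|\mathcal{A}\|=\Theta(nm)$ can occur.
   Context: All graphs are finite, simple, undirected, with no isolated vertices; $N[v]=N(v)\cup\{v\}$ is the closed neighbourhood. A clique is a vertex set inducing a complete subgraph. $\|\mathcal{F}\|:=\sum_{F\in\mathcal{F}}|F|$. A clique cover is an indexed family of cliques covering every edge. LA-succinct construction: maintain a family $\mathcal{C}$ of cliques of $G$, initially empty; an edge is uncovered if it is contained in no member. Update rule on an uncovered edge $\{u,v\}$: (1) if some $C_\ell\in\mathcal{C}$ has $C_\ell\cup\{u,v\}$ a clique of $G$, choose exactly one such $C_\ell$ and replace it by $C_\ell\cup\{u,v\}$; (2) otherwise add a new member $\{u,v\}$ with a new label. Step (1) is always applied when applicable. An LA-succinct clique cover is a clique cover obtained from the empty family by repeatedly applying this rule to uncovered edges (in any order). For a clique cover $\{C_\ell\}_{\ell\in I}$, the admissibility sets are $A_v:=\{\ell\in I: C_\ell\subseteq N[v]\}$, $v\in V$. *)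

theory Defs
  imports Complex_Main
begin

definition simple_graph :: "'a set \<Rightarrow> 'a set set \<Rightarrow> bool" where
  "simple_graph V E \<longleftrightarrow> finite V
     \<and> (\<forall>e\<in>E. \<exists>u v. e = {u, v} \<and> u \<noteq> v \<and> u \<in> V \<and> v \<in> V)
     \<and> (\<forall>v\<in>V. \<exists>e\<in>E. v \<in> e)"

definition is_clique :: "'a set \<Rightarrow> 'a set set \<Rightarrow> 'a set \<Rightarrow> bool" where
  "is_clique V E C \<longleftrightarrow> C \<subseteq> V \<and> (\<forall>u\<in>C. \<forall>v\<in>C. u \<noteq> v \<longrightarrow> {u, v} \<in> E)"

definition closed_nbhd :: "'a set set \<Rightarrow> 'a \<Rightarrow> 'a set" where
  "closed_nbhd E v = {u. {u, v} \<in> E} \<union> {v}"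

text \<open>A family of cliques is an indexed family, represented as a list; labels are the list indices.\<close>
definition uncovered :: "'a set set \<Rightarrow> 'a set list \<Rightarrow> 'a set \<Rightarrow> bool" where
  "uncovered E Cs e \<longleftrightarrow> e \<in> E \<and> \<not> (\<exists>C\<in>set Cs. e \<subseteq> C)"

inductive la_step :: "'a set \<Rightarrow> 'a set set \<Rightarrow> 'a set list \<Rightarrow> 'a set list \<Rightarrow> bool"
  for V E where
  extend: "\<lbrakk> uncovered E Cs {u, v}; i < length Cs; is_clique V E (Cs ! i \<union> {u, v}) \<rbrakk>
           \<Longrightarrow> la_step V E Cs (Cs[i := Cs ! i \<union> {u, v}])"
| new: "\<lbrakk> uncovered E Cs {u, v}; \<not> (\<exists>i < length Cs. is_clique V E (Cs ! i \<union> {u, v})) \<rbrakk>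
           \<Longrightarrow> la_step V E Cs (Cs @ [{u, v}])"

definition la_succinct_cover :: "'a set \<Rightarrow> 'a set set \<Rightarrow> 'a set list \<Rightarrow> bool" where
  "la_succinct_cover V E Cs \<longleftrightarrow> (la_step V E)\<^sup>*\<^sup>* [] Cs \<and> (\<forall>e\<in>E. \<exists>C\<in>set Cs. e \<subseteq> C)"

definition adm_set :: "'a set set \<Rightarrow> 'a set list \<Rightarrow> 'a \<Rightarrow> nat set" where
  "adm_set E Cs v = {l. l < length Cs \<and> Cs ! l \<subseteq> closed_nbhd E v}"

definition adm_size :: "'a set \<Rightarrow> 'a set set \<Rightarrow> 'a set list \<Rightarrow> nat" where
  "adm_size V E Cs = (\<Sum>v\<in>V. card (adm_set E Cs v))"

end

theory Submission
  imports Defs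
begin

text \<open>Let \<open>G\<^sub>t\<close> be the complete bipartite graph \<open>K\<^sub>t\<^sub>,\<^sub>t\<close> on \<open>A \<union> B\<close> joined to a
  clique \<open>W\<close> of \<open>t\<close> further vertices, each adjacent to everything. Then \<open>n = 3t\<close> and
  \<open>t\<^sup>2 \<le> m \<le> 9t\<^sup>2\<close>. No clique contains two distinct edges between \<open>A\<close> and \<open>B\<close>, so every
  clique cover, in particular an LA-succinct one, has at least \<open>t\<^sup>2\<close> members; every
  member lies in \<open>N[w]\<close> for each of the \<open>t\<close> universal vertices \<open>w \<in> W\<close>, hence
  \<open>\<parallel>\<A>\<parallel> \<ge> t\<^sup>3 \<ge> nm/27\<close>.\<close>

lemma la_step_members_grow:
  assumes "la_step V E Cs Cs'" and "C \<in> set Cs"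
  shows "\<exists>C'\<in>set Cs'. C \<subseteq> C'"
  using assms(1)
proof cases
  case (extend u v i)
  from assms(2) obtain j where j: "j < length Cs" "C = Cs ! j"
    by (auto simp: in_set_conv_nth)
  then have "C \<subseteq> Cs' ! j" using extend by (auto simp: nth_list_update)
  moreover have "Cs' ! j \<in> set Cs'" using extend j by simp
  ultimately show ?thesis by blast
next
  case new
  then show ?thesis using assms(2) by auto
qed

lemma la_step_covering_edge:
  assumes "uncovered E Cs {u, v}"
  shows "\<exists>Cs'. la_step V E Cs Cs' \<and> (\<exists>C\<in>set Cs'. {u, v} \<subseteq> C)"
proof (cases "\<exists>i < length Cs. is_clique V E (Cs ! i \<union> {u, v})")
  case True
  then obtain i where i: "i < length Cs" "is_clique V E (Cs ! i \<union> {u, v})" by blast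
  let ?Cs' = "Cs[i := Cs ! i \<union> {u, v}]"
  have "la_step V E Cs ?Cs'" using la_step.extend[OF assms i] .
  moreover have "?Cs' ! i \<in> set ?Cs'" and "{u, v} \<subseteq> ?Cs' ! i"
    using i(1) by (auto simp: set_update_memI)
  ultimately show ?thesis by blast
next
  case False
  then have "la_step V E Cs (Cs @ [{u, v}])" using la_step.new[OF assms] by blast
  then show ?thesis by auto
qed

lemma la_steps_reach_cover:
  assumes "finite E" and "\<forall>e\<in>E. \<exists>u v. e = {u, v}"
  shows "\<exists>Cs'. (la_step V E)\<^sup>*\<^sup>* Cs Cs' \<and> (\<forall>e\<in>E. \<exists>C\<in>set Cs'. e \<subseteq> C)"
proof (induction "card {e. uncovered E Cs e}" arbitrary: Cs rule: less_induct)
  case less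
  show ?case
  proof (cases "\<exists>e. uncovered E Cs e")
    case False
    then show ?thesis by (auto simp: uncovered_def)
  next
    case True
    then obtain u v where uv: "uncovered E Cs {u, v}"
      using assms(2) by (metis uncovered_def)
    obtain Cs' where step: "la_step V E Cs Cs'" and "\<exists>C\<in>set Cs'. {u, v} \<subseteq> C"
      using la_step_covering_edge[OF uv] by blast
    then have "\<not> uncovered E Cs' {u, v}" by (simp add: uncovered_def)
    moreover have "uncovered E Cs e" if "uncovered E Cs' e" for e
      using that la_step_members_grow[OF step] unfolding uncovered_def by (meson order_trans)
    ultimately have "{e. uncovered E Cs' e} \<subset> {e. uncovered E Cs e}"
      using uv by blast
    moreover have "finite {e. uncovered E Cs e}"
      using assms(1) by (simp add: uncovered_def)
    ultimately have "card {e. uncovered E Cs' e} < card {e. uncovered E Cs e}"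
      by (simp add: psubset_card_mono)
    then obtain Cs'' where "(la_step V E)\<^sup>*\<^sup>* Cs' Cs''"
      and "\<forall>e\<in>E. \<exists>C\<in>set Cs''. e \<subseteq> C"
      using less by blast
    then show ?thesis using converse_rtranclp_into_rtranclp[of "la_step V E", OF step] by blast
  qed
qed

lemma simple_graph_edge_subset:
  assumes "simple_graph V E" and "e \<in> E"
  shows "e \<subseteq> V"
proof -
  obtain u v where "e = {u, v}" "u \<in> V" "v \<in> V"
    using assms unfolding simple_graph_def by meson
  then show ?thesis by simp
qed

lemma finite_edges_if_simple_graph:
  assumes "simple_graph V E"
  shows "finite E"
proof -
  have "E \<subseteq> Pow V" using simple_graph_edge_subset[OF assms] by blast
  then show ?thesis using assms by (meson finite_Pow_iff rev_finite_subset simple_graph_def)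
qed

lemma la_succinct_cover_exists:
  assumes "simple_graph V E"
  shows "\<exists>Cs. la_succinct_cover V E Cs"
  using la_steps_reach_cover[OF finite_edges_if_simple_graph[OF assms], of V "[]"] assms
  unfolding la_succinct_cover_def simple_graph_def by blast

lemma edge_is_clique:
  assumes "simple_graph V E" and "{u, v} \<in> E"
  shows "is_clique V E {u, v}"
  unfolding is_clique_def
proof (intro conjI ballI impI)
  show "{u, v} \<subseteq> V" using simple_graph_edge_subset[OF assms] .
next
  fix x y assume "x \<in> {u, v}" "y \<in> {u, v}" "x \<noteq> y"
  then have "{x, y} = {u, v}" by blast
  then show "{x, y} \<in> E" using assms(2) by simp
qed

lemma la_steps_preserve_cliques:
  assumes "(la_step V E)\<^sup>*\<^sup>* Cs0 Cs" and "simple_graph V E"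
    and "\<forall>C\<in>set Cs0. is_clique V E C"
  shows "\<forall>C\<in>set Cs. is_clique V E C"
  using assms(1)
proof (induction rule: rtranclp_induct)
  case base
  then show ?case using assms(3) .
next
  case (step Cs Cs')
  from step.hyps(2) show ?case
  proof cases
    case (extend u v i)
    have "set Cs' \<subseteq> insert (Cs ! i \<union> {u, v}) (set Cs)"
      using extend(1) set_update_subset_insert by metis
    then show ?thesis using extend(4) step.IH by blast
  next
    case (new u v)
    then have "is_clique V E {u, v}"
      using edge_is_clique[OF assms(2)] by (simp add: uncovered_def)
    then show ?thesis using new(1) step.IH by simp
  qed
qed

lemma la_succinct_cover_cliques:
  assumes "simple_graph V E" and "la_succinct_cover V E Cs" and "C \<in> set Cs"
  shows "is_clique V E C"
  using la_steps_preserve_cliques[of V E "[]" Cs, OF _ assms(1)] assms(2,3)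
  unfolding la_succinct_cover_def by simp

lemma card_le_length_cover_if_no_common_clique:
  assumes cover: "\<forall>e\<in>E. \<exists>C\<in>set Cs. e \<subseteq> C"
    and cliques: "\<forall>C\<in>set Cs. is_clique V E C"
    and "F \<subseteq> E"
    and separated: "\<And>e e' C. e \<in> F \<Longrightarrow> e' \<in> F \<Longrightarrow> is_clique V E C \<Longrightarrow> e \<union> e' \<subseteq> C \<Longrightarrow> e = e'"
  shows "card F \<le> length Cs"
proof -
  define label where "label e = (SOME l. l < length Cs \<and> e \<subseteq> Cs ! l)" for e
  have label: "label e < length Cs \<and> e \<subseteq> Cs ! label e" if "e \<in> F" for e
  proof -
    have "\<exists>l. l < length Cs \<and> e \<subseteq> Cs ! l"
      using cover that \<open>F \<subseteq> E\<close> by (metis in_set_conv_nth subsetD)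
    then show ?thesis unfolding label_def by (rule someI_ex)
  qed
  have "inj_on label F"
  proof (rule inj_onI)
    fix e e' assume e: "e \<in> F" and e': "e' \<in> F" and "label e = label e'"
    then have "e \<union> e' \<subseteq> Cs ! label e" using label[OF e] label[OF e'] by simp
    moreover have "is_clique V E (Cs ! label e)" using cliques label[OF e] by simp
    ultimately show "e = e'" using separated e e' by blast
  qed
  moreover have "label ` F \<subseteq> {..<length Cs}" using label by auto
  ultimately show ?thesis using card_inj_on_le[of label F "{..<length Cs}"] by simp
qed

lemma card_mult_length_le_adm_size:
  assumes "finite V" and "U \<subseteq> V"
    and universal: "\<And>w C. w \<in> U \<Longrightarrow> C \<in> set Cs \<Longrightarrow> C \<subseteq> closed_nbhd E w"
  shows "card U * length Cs \<le> adm_size V E Cs"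
proof -
  have "adm_set E Cs w = {..<length Cs}" if "w \<in> U" for w
    using universal[OF that] nth_mem unfolding adm_set_def by blast
  then have "card U * length Cs = (\<Sum>w\<in>U. card (adm_set E Cs w))" by simp
  also have "\<dots> \<le> adm_size V E Cs"
    unfolding adm_size_def using assms(1,2) by (rule sum_mono2) simp
  finally show ?thesis .
qed

lemma card_edges_le_square:
  assumes "simple_graph V E"
  shows "card E \<le> card V ^ 2"
proof -
  have "E \<subseteq> (\<lambda>(x, y). {x, y}) ` (V \<times> V)"
    using assms unfolding simple_graph_def by fast
  then have "card E \<le> card ((\<lambda>(x, y). {x, y}) ` (V \<times> V))"
    using assms by (intro card_mono) (auto simp: simple_graph_def)
  also have "\<dots> \<le> card (V \<times> V)" by (rule card_image_le) (use assms in \<open>simp add: simple_graph_def\<close>)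
  finally show ?thesis by (simp add: card_cartesian_product power2_eq_square)
qed

text \<open>The vertices of \<open>G\<^sub>t\<close> are \<open>A = {..<t}\<close>, \<open>B = {t..<2t}\<close> and \<open>W = {2t..<3t}\<close>.\<close>

definition Gt_adj :: "nat \<Rightarrow> nat \<Rightarrow> nat \<Rightarrow> bool" where
  "Gt_adj t x y \<longleftrightarrow> x \<noteq> y \<and> (2 * t \<le> x \<or> 2 * t \<le> y \<or> (x < t) \<noteq> (y < t))"

definition Gt_verts :: "nat \<Rightarrow> nat set" where
  "Gt_verts t = {..<3 * t}"

definition Gt_edges :: "nat \<Rightarrow> nat set set" where
  "Gt_edges t = {{x, y} | x y. x < 3 * t \<and> y < 3 * t \<and> Gt_adj t x y}"

definition Gt_cross_edges :: "nat \<Rightarrow> nat set set" where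
  "Gt_cross_edges t = (\<lambda>(a, b). {a, b}) ` ({..<t} \<times> {t..<2 * t})"

lemma mem_Gt_edges: "{x, y} \<in> Gt_edges t \<longleftrightarrow> x < 3 * t \<and> y < 3 * t \<and> Gt_adj t x y"
  unfolding Gt_edges_def Gt_adj_def by (auto simp: doubleton_eq_iff)

lemma simple_graph_Gt:
  assumes "t \<ge> 1"
  shows "simple_graph (Gt_verts t) (Gt_edges t)"
  unfolding simple_graph_def
proof (intro conjI ballI)
  fix v assume v: "v \<in> Gt_verts t"
  have "{v, if v = 2 * t then 0 else 2 * t} \<in> Gt_edges t"
    using assms v by (auto simp: mem_Gt_edges Gt_adj_def Gt_verts_def)
  then show "\<exists>e\<in>Gt_edges t. v \<in> e" by blast
qed (auto simp: Gt_verts_def Gt_edges_def Gt_adj_def)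

lemma card_Gt_cross_edges: "card (Gt_cross_edges t) = t ^ 2"
proof -
  have "inj_on (\<lambda>(a, b). {a, b}) ({..<t} \<times> {t..<2 * t})"
    by (auto simp: inj_on_def doubleton_eq_iff)
  then show ?thesis
    by (simp add: Gt_cross_edges_def card_image card_cartesian_product power2_eq_square)
qed

lemma Gt_cross_edges_subset: "Gt_cross_edges t \<subseteq> Gt_edges t"
  by (auto simp: Gt_cross_edges_def mem_Gt_edges Gt_adj_def)

lemma card_Gt_edges_bounds:
  assumes "t \<ge> 1"
  shows "t ^ 2 \<le> card (Gt_edges t)" and "card (Gt_edges t) \<le> 9 * t ^ 2"
proof -
  have graph: "simple_graph (Gt_verts t) (Gt_edges t)" using simple_graph_Gt[OF assms] .
  show "t ^ 2 \<le> card (Gt_edges t)"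
    using card_mono[OF finite_edges_if_simple_graph[OF graph] Gt_cross_edges_subset]
    by (simp add: card_Gt_cross_edges)
  show "card (Gt_edges t) \<le> 9 * t ^ 2"
    using card_edges_le_square[OF graph] by (simp add: Gt_verts_def power_mult_distrib)
qed

lemma Gt_cross_edges_no_common_clique:
  assumes "e \<in> Gt_cross_edges t" "e' \<in> Gt_cross_edges t"
    and "is_clique (Gt_verts t) (Gt_edges t) C" "e \<union> e' \<subseteq> C"
  shows "e = e'"
proof -
  obtain a b a' b' where "e = {a, b}" "e' = {a', b'}"
    and "a < t" "a' < t" "t \<le> b" "b < 2 * t" "t \<le> b'" "b' < 2 * t"
    using assms(1,2) by (auto simp: Gt_cross_edges_def)
  moreover have "\<not> Gt_adj t a a'" "\<not> Gt_adj t b b'"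
    using \<open>a < t\<close> \<open>a' < t\<close> \<open>t \<le> b\<close> \<open>b < 2 * t\<close> \<open>t \<le> b'\<close> \<open>b' < 2 * t\<close>
    by (auto simp: Gt_adj_def)
  ultimately show ?thesis
    using assms(3,4) unfolding is_clique_def by (auto simp: mem_Gt_edges)
qed

lemma Gt_universal:
  assumes "w \<in> {2 * t..<3 * t}" and "C \<subseteq> Gt_verts t"
  shows "C \<subseteq> closed_nbhd (Gt_edges t) w"
  using assms by (auto simp: closed_nbhd_def mem_Gt_edges Gt_adj_def Gt_verts_def)

lemma Gt_adm_size_ge:
  assumes "t \<ge> 1" and cover: "la_succinct_cover (Gt_verts t) (Gt_edges t) Cs"
  shows "t ^ 3 \<le> adm_size (Gt_verts t) (Gt_edges t) Cs"
proof -
  have cliques: "\<forall>C\<in>set Cs. is_clique (Gt_verts t) (Gt_edges t) C"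
    using la_succinct_cover_cliques[OF simple_graph_Gt[OF assms(1)] cover] by blast
  have covered: "\<forall>e\<in>Gt_edges t. \<exists>C\<in>set Cs. e \<subseteq> C"
    using cover unfolding la_succinct_cover_def by blast
  have "card (Gt_cross_edges t) \<le> length Cs"
    using card_le_length_cover_if_no_common_clique[OF covered cliques Gt_cross_edges_subset]
      Gt_cross_edges_no_common_clique by blast
  then have "t ^ 3 \<le> card {2 * t..<3 * t} * length Cs"
    by (simp add: card_Gt_cross_edges power3_eq_cube power2_eq_square)
  also have "\<dots> \<le> adm_size (Gt_verts t) (Gt_edges t) Cs"
    using cliques by (intro card_mult_length_le_adm_size Gt_universal)
      (auto simp: Gt_verts_def is_clique_def)
  finally show ?thesis .
qed

theorem mainTheorem16:
  shows "\<exists>c1 c2 c3 :: real. c1 > 0 \<and> c2 > 0 \<and> c3 > 0 \<and>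
    (\<forall>t::nat. t \<ge> 1 \<longrightarrow>
      (\<exists>(V :: nat set) (E :: nat set set) Cs.
         simple_graph V E \<and>
         c1 * real t \<le> real (card V) \<and> real (card V) \<le> c2 * real t \<and>
         c1 * real t ^ 2 \<le> real (card E) \<and> real (card E) \<le> c2 * real t ^ 2 \<and>
         la_succinct_cover V E Cs \<and>
         real (adm_size V E Cs) \<ge> c3 * real (card V) * real (card E)))"
proof (rule exI[of _ 1], rule exI[of _ 9], rule exI[of _ "1/27"], intro conjI allI impI)
  fix t :: nat assume "t \<ge> 1"
  let ?V = "Gt_verts t" and ?E = "Gt_edges t"
  have graph: "simple_graph ?V ?E" using simple_graph_Gt[OF \<open>t \<ge> 1\<close>] .
  then obtain Cs where cover: "la_succinct_cover ?V ?E Cs"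
    using la_succinct_cover_exists by blast
  have n: "card ?V = 3 * t" by (simp add: Gt_verts_def)
  then have n_bounds: "1 * real t \<le> card ?V" "card ?V \<le> 9 * real t" by simp_all
  have m_lower: "1 * real t ^ 2 \<le> card ?E"
    using card_Gt_edges_bounds(1)[OF \<open>t \<ge> 1\<close>] by (simp flip: of_nat_power)
  have m_upper: "card ?E \<le> 9 * real t ^ 2"
    using card_Gt_edges_bounds(2)[OF \<open>t \<ge> 1\<close>]
    by (metis of_nat_le_iff of_nat_power of_nat_mult of_nat_numeral)
  have "1/27 * card ?V * card ?E = real t / 9 * card ?E" by (simp add: n)
  also have "\<dots> \<le> real t / 9 * (9 * real t ^ 2)" using m_upper by (intro mult_left_mono) auto
  also have "\<dots> = real (t ^ 3)" by (simp add: power3_eq_cube power2_eq_square)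
  also have "\<dots> \<le> adm_size ?V ?E Cs" using Gt_adm_size_ge[OF \<open>t \<ge> 1\<close> cover] by simp
  finally have adm: "1/27 * real (card ?V) * real (card ?E) \<le> real (adm_size ?V ?E Cs)" .
  show "\<exists>(V :: nat set) (E :: nat set set) Cs. simple_graph V E \<and>
      1 * real t \<le> real (card V) \<and> real (card V) \<le> 9 * real t \<and>
      1 * real t ^ 2 \<le> real (card E) \<and> real (card E) \<le> 9 * real t ^ 2 \<and>
      la_succinct_cover V E Cs \<and> 1/27 * real (card V) * real (card E) \<le> real (adm_size V E Cs)"
    using graph cover n_bounds m_lower m_upper adm by blast
qed simp_all

end
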